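(* Let $S$ be a subcartesian space. Then the function $N\colon S\to\mathbb{N}$, $x\mapsto n_x$, is upper semi-continuous, i.e. for every $a\in\mathbb{R}$ the set $\{x\in S\colon n_x<a\}$ is open in $S$.
   Context: A differential space (Sikorski) is a set $S$ with a family $C^\infty(S)$ of real functions, $S$ carrying the weakest topology making them continuous, closed under composition with smooth functions on $\mathbb{R}^k$, and such that functions locally agreeing with elements of $C^\infty(S)$ belong to $C^\infty(S)$; subsets inherit differential-space structures (for $V\subseteq\mathbb{R}^n$, smooth functions are those locally agreeing with restrictions of smooth functions on $\mathbb{R}^n$). Diffeomorphisms are smooth bijections with smooth inverses. A subcartesian space is a Hausdorff differential space each point of which has an open neighbourhood diffeomorphic to a differential subspace of some $\mathbb{R}^n$. The structural dimension $n_x$ of $S$ at $x$ is the smallest integer $n$ such that some open neighbourhood of $x$ in $S$ is diffeomorphic to a subset of $\mathbb{R}^n$. *)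

theory Defs
  imports "HOL-Analysis.Analysis"
begin

text \<open>R^n is modelled as the set of sequences vanishing from index n on.\<close>
definition Rn :: "nat \<Rightarrow> (nat \<Rightarrow> real) set" where
  "Rn n = {x. \<forall>i\<ge>n. x i = 0}"

definition partial :: "nat \<Rightarrow> ((nat \<Rightarrow> real) \<Rightarrow> real) \<Rightarrow> (nat \<Rightarrow> real) \<Rightarrow> real" where
  "partial i g x = deriv (\<lambda>t. g (x(i := x i + t))) 0"

fun iter_partial :: "nat list \<Rightarrow> ((nat \<Rightarrow> real) \<Rightarrow> real) \<Rightarrow> (nat \<Rightarrow> real) \<Rightarrow> real" where
  "iter_partial [] g = g"
| "iter_partial (i # is) g = partial i (iter_partial is g)"

definition smooth_Rn :: "nat \<Rightarrow> ((nat \<Rightarrow> real) \<Rightarrow> real) \<Rightarrow> bool" where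
  "smooth_Rn n g \<longleftrightarrow>
     (\<forall>is. set is \<subseteq> {..<n} \<longrightarrow>
        continuous_on (Rn n) (iter_partial is g) \<and>
        (\<forall>i<n. \<forall>x\<in>Rn n. (\<lambda>t. iter_partial is g (x(i := x i + t))) differentiable (at 0)))"

definition Rn_fns :: "nat \<Rightarrow> ((nat \<Rightarrow> real) \<Rightarrow> real) set" where
  "Rn_fns n = {g. smooth_Rn n g}"

definition dtop :: "'a set \<Rightarrow> ('a \<Rightarrow> real) set \<Rightarrow> 'a topology" where
  "dtop S F = topology_generated_by
      (insert S {{x \<in> S. f x \<in> V} | f V. f \<in> F \<and> open V})"

definition diff_space :: "'a set \<Rightarrow> ('a \<Rightarrow> real) set \<Rightarrow> bool" where
  "diff_space S F \<longleftrightarrow>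
     (\<forall>k \<phi> fs. smooth_Rn k \<phi> \<and> (\<forall>i<k. fs i \<in> F) \<longrightarrow>
        (\<lambda>x. \<phi> (\<lambda>i. if i < k then fs i x else 0)) \<in> F) \<and>
     (\<forall>h. (\<forall>x\<in>S. \<exists>U. openin (dtop S F) U \<and> x \<in> U \<and> (\<exists>f\<in>F. \<forall>y\<in>U. h y = f y))
          \<longrightarrow> h \<in> F)"

definition sub_fns :: "'a set \<Rightarrow> ('a \<Rightarrow> real) set \<Rightarrow> 'a set \<Rightarrow> ('a \<Rightarrow> real) set" where
  "sub_fns S F A = {h. \<forall>x\<in>A. \<exists>U. openin (subtopology (dtop S F) A) U \<and> x \<in> U \<and>
                          (\<exists>f\<in>F. \<forall>y\<in>U. h y = f y)}"

definition smooth_map :: "'a set \<Rightarrow> ('a \<Rightarrow> real) set \<Rightarrow> ('b \<Rightarrow> real) set \<Rightarrow> ('a \<Rightarrow> 'b) \<Rightarrow> bool" where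
  "smooth_map S F G \<phi> \<longleftrightarrow> (\<forall>g\<in>G. g \<circ> \<phi> \<in> F)"

definition diffeo :: "'a set \<Rightarrow> ('a \<Rightarrow> real) set \<Rightarrow> 'b set \<Rightarrow> ('b \<Rightarrow> real) set \<Rightarrow> ('a \<Rightarrow> 'b) \<Rightarrow> bool" where
  "diffeo S F T G \<phi> \<longleftrightarrow> bij_betw \<phi> S T \<and> smooth_map S F G \<phi> \<and> smooth_map T G F (inv_into S \<phi>)"

definition diffeo_to_Rn_subset :: "'a set \<Rightarrow> ('a \<Rightarrow> real) set \<Rightarrow> nat \<Rightarrow> bool" where
  "diffeo_to_Rn_subset U FU n \<longleftrightarrow>
     (\<exists>V \<phi>. V \<subseteq> Rn n \<and> diffeo U FU V (sub_fns (Rn n) (Rn_fns n) V) \<phi>)"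

definition subcartesian :: "'a set \<Rightarrow> ('a \<Rightarrow> real) set \<Rightarrow> bool" where
  "subcartesian S F \<longleftrightarrow> diff_space S F \<and> Hausdorff_space (dtop S F) \<and>
     (\<forall>x\<in>S. \<exists>U n. openin (dtop S F) U \<and> x \<in> U \<and> diffeo_to_Rn_subset U (sub_fns S F U) n)"

definition struct_dim :: "'a set \<Rightarrow> ('a \<Rightarrow> real) set \<Rightarrow> 'a \<Rightarrow> nat" where
  "struct_dim S F x = (LEAST n. \<exists>U. openin (dtop S F) U \<and> x \<in> U \<and>
                                    diffeo_to_Rn_subset U (sub_fns S F U) n)"

end

theory Submission
  imports Defs
begin

text \<open>An open neighbourhood U of x realising n_x is itself a neighbourhood of each of its
  points y, with the same embedding; hence n_y \<le> n_x on all of U, and every sublevel set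
  {n < a} is a union of such neighbourhoods.\<close>

lemma dtop_topspace: "topspace (dtop S F) = S"
  unfolding dtop_def topology_generated_by_topspace by blast

lemma Least_local_index_le:
  fixes n :: nat
  assumes "openin X U" "y \<in> U" "P U n"
  shows "(LEAST m. \<exists>V. openin X V \<and> y \<in> V \<and> P V m) \<le> n"
  by (rule Least_le) (use assms in blast)

lemma openin_Least_local_index_less:
  fixes X :: "'a topology" and P :: "'a set \<Rightarrow> nat \<Rightarrow> bool"
  defines "d \<equiv> \<lambda>x. LEAST n. \<exists>U. openin X U \<and> x \<in> U \<and> P U n"
  assumes covered: "\<And>x. x \<in> topspace X \<Longrightarrow> \<exists>U n. openin X U \<and> x \<in> U \<and> P U n"
  shows "openin X {x \<in> topspace X. real (d x) < a}"
proof (subst openin_subopen, intro ballI)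
  fix x assume x: "x \<in> {x \<in> topspace X. real (d x) < a}"
  then have "\<exists>n U. openin X U \<and> x \<in> U \<and> P U n"
    using covered by blast
  then have "\<exists>U. openin X U \<and> x \<in> U \<and> P U (d x)"
    unfolding d_def by (rule LeastI_ex)
  then obtain U where U: "openin X U" "x \<in> U" "P U (d x)"
    by blast
  have "d y \<le> d x" if "y \<in> U" for y
    using Least_local_index_le[where P = P, OF U(1) that U(3)] unfolding d_def .
  then have "U \<subseteq> {x \<in> topspace X. real (d x) < a}"
    using x openin_subset[OF U(1)] by force
  with U show "\<exists>T. openin X T \<and> x \<in> T \<and> T \<subseteq> {x \<in> topspace X. real (d x) < a}"
    by blast
qed

theorem mainTheorem4:
  fixes S :: "'a set" and F :: "('a \<Rightarrow> real) set"
  assumes "subcartesian S F"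
  shows "\<forall>a::real. openin (dtop S F) {x \<in> S. real (struct_dim S F x) < a}"
proof
  fix a :: real
  have "\<And>x. x \<in> topspace (dtop S F) \<Longrightarrow>
          \<exists>U n. openin (dtop S F) U \<and> x \<in> U \<and> diffeo_to_Rn_subset U (sub_fns S F U) n"
    using assms unfolding subcartesian_def dtop_topspace by blast
  from openin_Least_local_index_less[of "dtop S F", OF this]
  show "openin (dtop S F) {x \<in> S. real (struct_dim S F x) < a}"
    unfolding dtop_topspace struct_dim_def .
qed

end
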